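(* Let $1\le d<n$, let $\underline i_{\max,n-1}:=(n-d)(n-d+1)\cdots(n-1)$ and $\underline i_{\max}:=(n-d+1)(n-d+2)\cdots n$, and let $M=\{\underline i\in I(d,n)\mid \ell(\underline i)=\ell(\underline i_{\max,n-1})\}$. Then: (i) $\underline i_{\max,n-1}\ge_{lex}\underline j$ for all $\underline j\in M$. (ii) The interval $\{\underline j\in I(d,n)\mid \underline i_{\max,n-1}\le_{lex}\underline j\le_{lex}\underline i_{\max}\}$ with respect to the lexicographic order equals the interval $[\underline i_{\max,n-1},\underline i_{\max}]$ with respect to the Bruhat order, it is totally ordered with respect to the Bruhat order, and its elements are exactly the rows $(n-d)(n-d+1)\cdots(n-d+k-1)(n-d+k+1)\cdots n$ for $k=0,1,\dots,d$ (obtained from $\underline i_{\max}$ by lowering its first $k$ entries by one), which are the first $d+1$ elements (from the top) of the leftmost maximal chain $\mathfrak C_{\mathrm{left}}$.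
   Context: $I(d,n)$ is the set of $d$-element subsets of $\{1,\dots,n\}$ written as increasing sequences $i_1\cdots i_d$; the Bruhat order is $\underline i\le\underline j$ iff $i_k\le j_k$ for all $k$; $\le_{lex}$ is the lexicographic order on such sequences; $\ell(\underline i)=\sum_h(i_h-h)$. $\mathfrak C_{\mathrm{left}}$ is the maximal chain of $I(d,n)$ which is largest in the lexicographic order on concatenated strings $\underline i_r\cdots\underline i_0$; it is obtained from $\underline i_{\max}$ by lowering successively the first, second, ..., $d$-th entry by one, then again the first, second, ..., and so on. *)

theory Defs
  imports Main
begin

text \<open>Elements of I(d,n): strictly increasing lists of length d with entries in {1..n}.
  Entries are 0-indexed in the list, so position h (0-based) is i_(h+1).\<close>
definition Idn :: "nat \<Rightarrow> nat \<Rightarrow> nat list set" where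
  "Idn d n = {xs. length xs = d \<and> sorted_wrt (<) xs \<and> set xs \<subseteq> {1..n}}"

definition bruhat_le :: "nat list \<Rightarrow> nat list \<Rightarrow> bool" where
  "bruhat_le xs ys \<longleftrightarrow> length xs = length ys \<and> (\<forall>k<length xs. xs ! k \<le> ys ! k)"

definition bruhat_less :: "nat list \<Rightarrow> nat list \<Rightarrow> bool" where
  "bruhat_less xs ys \<longleftrightarrow> bruhat_le xs ys \<and> xs \<noteq> ys"

definition lex_le :: "nat list \<Rightarrow> nat list \<Rightarrow> bool" where
  "lex_le xs ys \<longleftrightarrow> xs = ys \<or> (xs, ys) \<in> lexord {(a, b). a < b}"

definition ell :: "nat list \<Rightarrow> nat" where
  "ell xs = (\<Sum>h<length xs. xs ! h - (h + 1))"

definition imax :: "nat \<Rightarrow> nat \<Rightarrow> nat list" where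
  "imax d n = [n - d + 1 ..< n + 1]"

definition imin :: "nat \<Rightarrow> nat list" where
  "imin d = [1 ..< d + 1]"

definition imax_n1 :: "nat \<Rightarrow> nat \<Rightarrow> nat list" where
  "imax_n1 d n = [n - d ..< n]"

definition row :: "nat \<Rightarrow> nat \<Rightarrow> nat \<Rightarrow> nat list" where
  "row d n k = [n - d ..< n - d + k] @ [n - d + k + 1 ..< n + 1]"

definition bruhat_covers :: "nat \<Rightarrow> nat \<Rightarrow> nat list \<Rightarrow> nat list \<Rightarrow> bool" where
  "bruhat_covers d n a b \<longleftrightarrow> a \<in> Idn d n \<and> b \<in> Idn d n \<and> bruhat_less a b \<and>
     \<not> (\<exists>c \<in> Idn d n. bruhat_less a c \<and> bruhat_less c b)"

definition max_chain :: "nat \<Rightarrow> nat \<Rightarrow> nat list list \<Rightarrow> bool" where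
  "max_chain d n L \<longleftrightarrow> L \<noteq> [] \<and> hd L = imax d n \<and> last L = imin d \<and>
     (\<forall>t. Suc t < length L \<longrightarrow> bruhat_covers d n (L ! Suc t) (L ! t))"

definition is_C_left :: "nat \<Rightarrow> nat \<Rightarrow> nat list list \<Rightarrow> bool" where
  "is_C_left d n L \<longleftrightarrow> max_chain d n L \<and>
     (\<forall>L'. max_chain d n L' \<longrightarrow> lex_le (concat L') (concat L))"

end

(*
  An element of I(d,n) that is lexicographically at least i_max,n-1 has first entry at least n-d;
  since the entries are strictly increasing and bounded by n-d+h+1, every entry is then pinned
  to one of two values, n-d+h or n-d+h+1, and the jump happens once: the element is one of the
  rows row k. The rows form a Bruhat chain from i_max down to i_max,n-1, Bruhat order implies
  lexicographic order, and ell (row k) = d (n-d) - k, which gives all statements about the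
  interval and about the level set of ell.

  C_left is greedy: replacing the part of a maximal chain below its k-th element by any saturated
  chain through another lower cover y of that element is again a maximal chain, so the (k+1)-st
  element of C_left is lexicographically largest among the lower covers. Below row k the lower
  cover row (k+1) has first entry n-d, hence so does the next element of C_left; it is therefore
  a row covered by row k, i.e. row (k+1).
*)
theory Submission
  imports Defs "HOL-Library.List_Lexorder"
begin

lemma lex_le_iff_less_eq: "lex_le xs ys \<longleftrightarrow> xs \<le> ys"
  by (auto simp: lex_le_def list_le_def list_less_def)

lemma nth0_le_if_less_eq_list:
  "(xs :: 'a :: linorder list) \<le> ys \<Longrightarrow> xs \<noteq> [] \<Longrightarrow> ys \<noteq> [] \<Longrightarrow> xs ! 0 \<le> ys ! 0"
  by (cases xs; cases ys) auto

lemma append_less_append_same_length: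
  "length u = length w \<Longrightarrow> (u :: 'a :: order list) < w \<Longrightarrow> u @ v < w @ z"
  unfolding list_less_def by (simp add: lexord_sufI)

lemma append_less_append_left: "(xs :: 'a :: order list) < ys \<Longrightarrow> zs @ xs < zs @ ys"
  unfolding list_less_def by (rule lexord_append_leftI)

lemma distinct_if_sorted_wrt_irrefl:
  "sorted_wrt P xs \<Longrightarrow> (\<And>x. \<not> P x x) \<Longrightarrow> distinct xs"
  by (induction xs) auto

lemma sorted_wrt_less_nth_add_le:
  assumes "sorted_wrt (<) (xs :: nat list)" "i \<le> j" "j < length xs"
  shows "xs ! i + (j - i) \<le> xs ! j"
  using assms(2,3)
proof (induction j)
  case (Suc j)
  show ?case
  proof (cases "i = Suc j")
    case False
    then have "xs ! i + (j - i) \<le> xs ! j" using Suc by auto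
    moreover have "xs ! j < xs ! Suc j" using assms(1) Suc.prems by (simp add: sorted_wrt_nth_less)
    ultimately show ?thesis using False Suc.prems by linarith
  qed simp
qed simp

lemma bruhat_le_antisym: "bruhat_le a b \<Longrightarrow> bruhat_le b a \<Longrightarrow> a = b"
  unfolding bruhat_le_def by (auto intro: nth_equalityI simp: order_antisym)

lemma bruhat_le_trans: "bruhat_le a b \<Longrightarrow> bruhat_le b c \<Longrightarrow> bruhat_le a c"
  unfolding bruhat_le_def by (metis order_trans)

lemma bruhat_less_trans: "bruhat_less a b \<Longrightarrow> bruhat_less b c \<Longrightarrow> bruhat_less a c"
  unfolding bruhat_less_def using bruhat_le_trans bruhat_le_antisym by blast

lemma bruhat_le_imp_less_eq_list: "bruhat_le a b \<Longrightarrow> a \<le> b"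
proof -
  assume "bruhat_le a b"
  then have "length a = length b" "\<forall>k<length a. a ! k \<le> b ! k" by (auto simp: bruhat_le_def)
  then show "a \<le> b"
  proof (induction a b rule: list_induct2)
    case (Cons x xs y ys)
    then have "x \<le> y" and "xs \<le> ys" by force+
    then show ?case by (auto simp: order.order_iff_strict)
  qed simp
qed

lemma bruhat_less_imp_sum_list_less:
  assumes "bruhat_less a b"
  shows "sum_list a < sum_list b"
proof -
  have len: "length a = length b" and le: "\<forall>k<length a. a ! k \<le> b ! k"
    using assms by (auto simp: bruhat_less_def bruhat_le_def)
  have "a \<noteq> b" using assms by (simp add: bruhat_less_def)
  then obtain k where k: "k < length a" "a ! k \<noteq> b ! k"
    using len nth_equalityI by blast
  then have "a ! k < b ! k" using le by (simp add: order_less_le)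
  then have "(\<Sum>h<length a. a ! h) < (\<Sum>h<length a. b ! h)"
    using le k(1) by (intro sum_strict_mono_ex1) auto
  then show ?thesis by (simp add: sum_list_sum_nth len atLeast0LessThan)
qed

lemma Idn_iff_nth:
  "x \<in> Idn d n \<longleftrightarrow> length x = d \<and> (\<forall>i j. i < j \<longrightarrow> j < d \<longrightarrow> x ! i < x ! j)
     \<and> (\<forall>h<d. 1 \<le> x ! h \<and> x ! h \<le> n)"
proof -
  have "set x \<subseteq> {1..n} \<longleftrightarrow> (\<forall>h<length x. 1 \<le> x ! h \<and> x ! h \<le> n)"
    by (auto simp: subset_iff in_set_conv_nth)
  then show ?thesis unfolding Idn_def sorted_wrt_iff_nth_less mem_Collect_eq by blast
qed

lemma Idn_nth_bounds:
  assumes "x \<in> Idn d n" "h < d"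
  shows "h + 1 \<le> x ! h" "x ! h + d \<le> n + h + 1"
proof -
  have s: "sorted_wrt (<) x" and l: "length x = d" using assms(1) by (auto simp: Idn_def)
  have b: "\<forall>h<d. 1 \<le> x ! h \<and> x ! h \<le> n" using assms(1) by (simp add: Idn_iff_nth)
  have "x ! 0 + h \<le> x ! h" using sorted_wrt_less_nth_add_le[OF s, of 0 h] assms l by simp
  then show "h + 1 \<le> x ! h" using b assms by force
  have "x ! h + (d - 1 - h) \<le> x ! (d - 1)"
    using sorted_wrt_less_nth_add_le[OF s, of h "d - 1"] assms l by simp
  moreover have "x ! (d - 1) \<le> n" using b assms by simp
  ultimately show "x ! h + d \<le> n + h + 1" using assms by linarith
qed

lemma finite_Idn: "finite (Idn d n)"
  by (rule finite_subset[OF _ finite_lists_length_eq[of "{1..n}" d]]) (auto simp: Idn_def)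

lemma bruhat_covers_if_nth_Suc:
  assumes a: "a \<in> Idn d n" and b: "b \<in> Idn d n" and p: "p < d" and ab: "b ! p = a ! p + 1"
    and eq: "\<forall>h<d. h \<noteq> p \<longrightarrow> a ! h = b ! h"
  shows "bruhat_covers d n a b"
proof -
  have la: "length a = d" and lb: "length b = d" using a b by (auto simp: Idn_def)
  have "a ! k \<le> b ! k" if "k < d" for k
    using eq ab that by (cases "k = p") auto
  then have "bruhat_le a b" using la lb by (simp add: bruhat_le_def)
  moreover have "a \<noteq> b" using ab by auto
  moreover have "\<not> (bruhat_less a c \<and> bruhat_less c b)" for c
  proof
    assume "bruhat_less a c \<and> bruhat_less c b"
    then have lc: "length c = d" and ac: "\<forall>k<d. a ! k \<le> c ! k" and cb: "\<forall>k<d. c ! k \<le> b ! k"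
      and "c \<noteq> a" "c \<noteq> b"
      using la by (auto simp: bruhat_less_def bruhat_le_def)
    have off_p: "c ! h = a ! h" if "h < d" "h \<noteq> p" for h
    proof -
      have "a ! h \<le> c ! h" "c ! h \<le> b ! h" "a ! h = b ! h" using ac cb eq that by auto
      then show ?thesis by simp
    qed
    have "a ! p \<le> c ! p" "c ! p \<le> a ! p + 1" using ac cb ab p by auto
    then consider "c ! p = a ! p" | "c ! p = b ! p" using ab by linarith
    then show False
    proof cases
      case 1
      then have "c = a" using off_p lc la by (intro nth_equalityI) (simp, metis)
      then show False using \<open>c \<noteq> a\<close> by simp
    next
      case 2
      then have "c = b" using off_p eq lc lb by (intro nth_equalityI) (simp, metis)
      then show False using \<open>c \<noteq> b\<close> by simp
    qed
  qed
  ultimately show ?thesis using a b by (simp add: bruhat_covers_def bruhat_less_def)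
qed

lemma lower_cover_exists:
  assumes x: "x \<in> Idn d n" and "x \<noteq> imin d"
  shows "\<exists>y. bruhat_covers d n y x"
proof -
  have l: "length x = d" using x by (simp add: Idn_def)
  have "\<exists>p<d. x ! p \<noteq> p + 1"
    using assms l nth_equalityI[of x "imin d"] by (auto simp: imin_def simp del: upt_Suc)
  define p where "p = (LEAST p. p < d \<and> x ! p \<noteq> p + 1)"
  have pd: "p < d" and "x ! p \<noteq> p + 1"
    using LeastI_ex[OF \<open>\<exists>p<d. x ! p \<noteq> p + 1\<close>] by (auto simp: p_def)
  then have xp: "p + 2 \<le> x ! p" using Idn_nth_bounds(1)[OF x pd] by linarith
  have before: "x ! h = h + 1" if "h < p" for h
    using not_less_Least[of h "\<lambda>p. p < d \<and> x ! p \<noteq> p + 1"] that pd by (auto simp: p_def)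
  \<comment> \<open>the entries before p are minimal, so lowering x ! p keeps x strictly increasing\<close>
  define y where "y = x[p := x ! p - 1]"
  have ynth: "y ! h = (if h = p then x ! p - 1 else x ! h)" if "h < d" for h
    using that l by (simp add: y_def)
  have mono: "x ! i < x ! j" if "i < j" "j < d" for i j
    using x that by (simp add: Idn_iff_nth)
  have "y \<in> Idn d n"
    unfolding Idn_iff_nth
  proof (intro conjI allI impI)
    fix i j assume ij: "i < j" "j < d"
    show "y ! i < y ! j"
    proof (cases "j = p")
      case True
      then show ?thesis using ij xp ynth before[of i] by simp
    next
      case False
      have "x ! p - 1 < x ! j" if "p < j" using mono[OF that ij(2)] by linarith
      then show ?thesis using False ij mono[OF ij] ynth by simp
    qed
  next
    fix h assume "h < d"
    then show "1 \<le> y ! h" "y ! h \<le> n" using x ynth xp by (auto simp: Idn_iff_nth)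
  qed (simp add: y_def l)
  then have "bruhat_covers d n y x"
    by (rule bruhat_covers_if_nth_Suc[OF _ x pd]) (use ynth pd xp in auto)
  then show ?thesis by blast
qed

lemma length_row: "k \<le> d \<Longrightarrow> d \<le> n \<Longrightarrow> length (row d n k) = d"
  by (simp add: row_def, linarith)

lemma nth_row:
  "k \<le> d \<Longrightarrow> d \<le> n \<Longrightarrow> h < d \<Longrightarrow>
   row d n k ! h = (if h < k then n - d + h else n - d + h + 1)"
  by (auto simp: row_def nth_append)

lemma row_in_Idn: "k \<le> d \<Longrightarrow> d < n \<Longrightarrow> row d n k \<in> Idn d n"
  by (auto simp: Idn_iff_nth length_row nth_row)

lemma imax_eq_row: "imax d n = row d n 0"
  by (simp add: imax_def row_def)

lemma imax_n1_eq_row: "d \<le> n \<Longrightarrow> imax_n1 d n = row d n d"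
  by (simp add: imax_n1_def row_def)

lemma imax_in_Idn: "d < n \<Longrightarrow> imax d n \<in> Idn d n"
  by (simp add: imax_eq_row row_in_Idn)

lemma bruhat_le_row_row: "k \<le> m \<Longrightarrow> m \<le> d \<Longrightarrow> d \<le> n \<Longrightarrow> bruhat_le (row d n m) (row d n k)"
  by (auto simp: bruhat_le_def length_row nth_row)

lemma ell_row: "k \<le> d \<Longrightarrow> d < n \<Longrightarrow> ell (row d n k) + k = d * (n - d)"
proof -
  assume kd: "k \<le> d" and dn: "d < n"
  have "{..<d} \<inter> {h. h < k} = {..<k}" using kd by auto
  then have "(\<Sum>h<d. if h < k then 1 else 0) = k" by (simp add: sum.If_cases)
  then have "ell (row d n k) + k = (\<Sum>h<d. row d n k ! h - (h + 1)) + (\<Sum>h<d. if h < k then 1 else 0)"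
    using kd dn by (simp add: ell_def length_row)
  also have "\<dots> = (\<Sum>h<d. n - d)"
    unfolding sum.distrib[symmetric] using kd dn by (intro sum.cong) (auto simp: nth_row)
  finally show ?thesis by simp
qed

lemma Idn_row_iff:
  assumes "1 \<le> d" "d < n"
  shows "x \<in> Idn d n \<and> n - d \<le> x ! 0 \<longleftrightarrow> x \<in> row d n ` {0..d}"
proof
  assume "x \<in> Idn d n \<and> n - d \<le> x ! 0"
  then have x: "x \<in> Idn d n" and x0: "n - d \<le> x ! 0" by auto
  have s: "sorted_wrt (<) x" and l: "length x = d" using x by (auto simp: Idn_def)
  have lo: "n - d + h \<le> x ! h" if "h < d" for h
    using sorted_wrt_less_nth_add_le[OF s, of 0 h] that l x0 by simp
  have hi: "x ! h \<le> n - d + h + 1" if "h < d" for h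
    using Idn_nth_bounds(2)[OF x that] assms(2) by linarith
  \<comment> \<open>each entry is pinned to two values; the row index is the position of the first jump\<close>
  define P where "P h \<longleftrightarrow> h = d \<or> h < d \<and> x ! h = n - d + h + 1" for h
  define k where "k = (LEAST h. P h)"
  have "P d" by (simp add: P_def)
  then have kd: "k \<le> d" and "P k" unfolding k_def by (auto intro: Least_le LeastI)
  have below: "x ! h = n - d + h" if "h < k" for h
    using not_less_Least[of h P] that kd lo[of h] hi[of h] by (auto simp: P_def k_def)
  have above: "x ! h = n - d + h + 1" if "k \<le> h" "h < d" for h
  proof -
    have "x ! k = n - d + k + 1" using \<open>P k\<close> that by (auto simp: P_def)
    moreover have "x ! k + (h - k) \<le> x ! h"
      using sorted_wrt_less_nth_add_le[OF s, of k h] that l by simp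
    ultimately show ?thesis using hi[OF that(2)] that by linarith
  qed
  have "x = row d n k"
    using kd assms(2) by (intro nth_equalityI) (auto simp: l length_row nth_row below above)
  then show "x \<in> row d n ` {0..d}" using kd by simp
qed (use assms row_in_Idn in \<open>auto simp: nth_row\<close>)

lemma bruhat_covers_row_Suc:
  "k < d \<Longrightarrow> d < n \<Longrightarrow> bruhat_covers d n (row d n (Suc k)) (row d n k)"
  by (rule bruhat_covers_if_nth_Suc[where p = k]) (auto simp: row_in_Idn nth_row)

lemma bruhat_covers_row_row_imp_Suc:
  assumes "m \<le> d" "k \<le> d" "d < n" and cov: "bruhat_covers d n (row d n m) (row d n k)"
  shows "m = Suc k"
proof -
  have less: "bruhat_less (row d n m) (row d n k)" using cov by (simp add: bruhat_covers_def)
  have "k < m"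
  proof (rule ccontr)
    assume "\<not> k < m"
    then have "bruhat_le (row d n k) (row d n m)" using assms bruhat_le_row_row by simp
    then show False using less bruhat_le_antisym by (auto simp: bruhat_less_def)
  qed
  show "m = Suc k"
  proof (rule ccontr)
    assume "m \<noteq> Suc k"
    with \<open>k < m\<close> have "Suc k < m" by simp
    then have "row d n m ! Suc k \<noteq> row d n (Suc k) ! Suc k" using assms by (simp add: nth_row)
    then have "bruhat_less (row d n m) (row d n (Suc k))"
      using \<open>Suc k < m\<close> assms bruhat_le_row_row by (auto simp: bruhat_less_def)
    moreover have "bruhat_less (row d n (Suc k)) (row d n k)" "row d n (Suc k) \<in> Idn d n"
      using \<open>k < m\<close> assms bruhat_covers_row_Suc row_in_Idn by (auto simp: bruhat_covers_def)
    ultimately show False using cov by (auto simp: bruhat_covers_def)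
  qed
qed

lemma row_between_imax_n1_imax:
  "k \<le> d \<Longrightarrow> d < n \<Longrightarrow> bruhat_le (imax_n1 d n) (row d n k) \<and> bruhat_le (row d n k) (imax d n)"
  by (simp add: imax_n1_eq_row imax_eq_row bruhat_le_row_row)

lemma lex_ge_imax_n1_imp_row:
  assumes "1 \<le> d" "d < n" "j \<in> Idn d n" "imax_n1 d n \<le> j"
  shows "j \<in> row d n ` {0..d}"
proof -
  have "imax_n1 d n ! 0 \<le> j ! 0"
    using assms by (intro nth0_le_if_less_eq_list) (auto simp: imax_n1_def Idn_def)
  then have "n - d \<le> j ! 0" using assms by (simp add: imax_n1_def)
  then show ?thesis using Idn_row_iff[OF assms(1,2), of j] assms(3) by simp
qed

lemma rows_subset_intervals:
  assumes "d < n" "j \<in> row d n ` {0..d}"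
  shows "j \<in> Idn d n" "bruhat_le (imax_n1 d n) j" "bruhat_le j (imax d n)"
  using assms(2) row_in_Idn[OF _ assms(1)] row_between_imax_n1_imax[OF _ assms(1)] by auto

lemma lex_interval_eq_rows:
  assumes "1 \<le> d" "d < n"
  shows "{j \<in> Idn d n. imax_n1 d n \<le> j \<and> j \<le> imax d n} = row d n ` {0..d}"
proof (intro set_eqI iffI)
  fix j assume "j \<in> {j \<in> Idn d n. imax_n1 d n \<le> j \<and> j \<le> imax d n}"
  then show "j \<in> row d n ` {0..d}" using lex_ge_imax_n1_imp_row assms by blast
next
  fix j assume "j \<in> row d n ` {0..d}"
  then show "j \<in> {j \<in> Idn d n. imax_n1 d n \<le> j \<and> j \<le> imax d n}"
    using rows_subset_intervals[OF assms(2)] bruhat_le_imp_less_eq_list by blast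
qed

lemma bruhat_interval_eq_rows:
  assumes "1 \<le> d" "d < n"
  shows "{j \<in> Idn d n. bruhat_le (imax_n1 d n) j \<and> bruhat_le j (imax d n)} = row d n ` {0..d}"
proof (intro set_eqI iffI)
  fix j assume "j \<in> {j \<in> Idn d n. bruhat_le (imax_n1 d n) j \<and> bruhat_le j (imax d n)}"
  then show "j \<in> row d n ` {0..d}"
    using lex_ge_imax_n1_imp_row assms bruhat_le_imp_less_eq_list by blast
next
  fix j assume "j \<in> row d n ` {0..d}"
  then show "j \<in> {j \<in> Idn d n. bruhat_le (imax_n1 d n) j \<and> bruhat_le j (imax d n)}"
    using rows_subset_intervals[OF assms(2)] by blast
qed

lemma rows_bruhat_total:
  assumes "d < n" "a \<in> row d n ` {0..d}" "b \<in> row d n ` {0..d}"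
  shows "bruhat_le a b \<or> bruhat_le b a"
proof -
  obtain k m where "k \<le> d" "m \<le> d" "a = row d n k" "b = row d n m" using assms by auto
  then show ?thesis using assms(1) bruhat_le_row_row[of k m d n] bruhat_le_row_row[of m k d n]
    by (cases "k \<le> m") auto
qed

lemma lex_le_imax_n1_if_same_ell:
  assumes "1 \<le> d" "d < n" "j \<in> Idn d n" "ell j = ell (imax_n1 d n)"
  shows "j \<le> imax_n1 d n"
proof (rule ccontr)
  assume "\<not> j \<le> imax_n1 d n"
  then have "imax_n1 d n < j" by simp
  moreover obtain k where "k \<le> d" "j = row d n k"
    using lex_ge_imax_n1_imp_row[OF assms(1-3) less_imp_le] \<open>imax_n1 d n < j\<close> by auto
  moreover have "k = d"
    using ell_row[of k d n] ell_row[of d d n] assms \<open>k \<le> d\<close> \<open>j = row d n k\<close>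
    by (simp add: imax_n1_eq_row)
  ultimately show False using assms by (simp add: imax_n1_eq_row)
qed

definition saturated_chain :: "nat \<Rightarrow> nat \<Rightarrow> nat list \<Rightarrow> nat list list \<Rightarrow> bool" where
  "saturated_chain d n x L \<longleftrightarrow> L \<noteq> [] \<and> hd L = x \<and> last L = imin d \<and>
     successively (\<lambda>a b. bruhat_covers d n b a) L"

lemma max_chain_iff_saturated_chain: "max_chain d n L \<longleftrightarrow> saturated_chain d n (imax d n) L"
  by (simp add: max_chain_def saturated_chain_def successively_conv_nth)

lemma saturated_chain_exists:
  assumes "x \<in> Idn d n"
  shows "\<exists>L. saturated_chain d n x L"
  using assms
proof (induction "sum_list x" arbitrary: x rule: less_induct)
  case less
  show ?case
  proof (cases "x = imin d")
    case True
    then show ?thesis by (intro exI[of _ "[x]"]) (simp add: saturated_chain_def)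
  next
    case False
    then obtain y where cov: "bruhat_covers d n y x" using lower_cover_exists less.prems by blast
    then have "y \<in> Idn d n" "sum_list y < sum_list x"
      by (auto simp: bruhat_covers_def intro: bruhat_less_imp_sum_list_less)
    then obtain L where "saturated_chain d n y L" using less.hyps by blast
    then have "saturated_chain d n x (x # L)"
      using cov by (auto simp: saturated_chain_def successively_Cons)
    then show ?thesis by blast
  qed
qed

lemma saturated_chain_sorted_wrt:
  assumes "saturated_chain d n x L"
  shows "sorted_wrt (\<lambda>a b. bruhat_less b a) L"
proof -
  have "successively (\<lambda>a b. bruhat_less b a) L"
    using assms by (auto simp: saturated_chain_def bruhat_covers_def elim: successively_mono)
  moreover have "transp (\<lambda>a b. bruhat_less b a)" unfolding transp_def using bruhat_less_trans by blast
  ultimately show ?thesis by (simp add: successively_conv_sorted_wrt)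
qed

lemma saturated_chain_in_Idn:
  assumes "saturated_chain d n x L" "x \<in> Idn d n"
  shows "set L \<subseteq> Idn d n"
proof
  fix a assume "a \<in> set L"
  then obtain t where t: "t < length L" "a = L ! t" by (auto simp: in_set_conv_nth)
  show "a \<in> Idn d n"
  proof (cases t)
    case 0
    then show ?thesis using assms t by (simp add: saturated_chain_def hd_conv_nth[symmetric])
  next
    case (Suc t')
    have "successively (\<lambda>a b. bruhat_covers d n b a) L"
      using assms(1) by (simp add: saturated_chain_def)
    then have "bruhat_covers d n (L ! t) (L ! t')" using successively_nth[of _ L t'] t Suc by simp
    then show ?thesis using t by (simp add: bruhat_covers_def)
  qed
qed

lemma finite_max_chains:
  assumes "d < n"
  shows "finite {L. max_chain d n L}"
proof (rule finite_subset[OF _ finite_subset_distinct[OF finite_Idn]])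
  show "{L. max_chain d n L} \<subseteq> {xs. set xs \<subseteq> Idn d n \<and> distinct xs}"
  proof
    fix L assume "L \<in> {L. max_chain d n L}"
    then have sat: "saturated_chain d n (imax d n) L" by (simp add: max_chain_iff_saturated_chain)
    have "distinct L"
      using distinct_if_sorted_wrt_irrefl[OF saturated_chain_sorted_wrt[OF sat]]
      by (simp add: bruhat_less_def)
    then show "L \<in> {xs. set xs \<subseteq> Idn d n \<and> distinct xs}"
      using saturated_chain_in_Idn[OF sat imax_in_Idn[OF assms]] by simp
  qed
qed

lemma C_left_exists:
  assumes "d < n"
  shows "\<exists>L. is_C_left d n L"
proof -
  let ?C = "{L. max_chain d n L}"
  have "?C \<noteq> {}"
    using saturated_chain_exists[OF imax_in_Idn[OF assms]] by (auto simp: max_chain_iff_saturated_chain)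
  then have "Max (concat ` ?C) \<in> concat ` ?C" using finite_max_chains[OF assms] by (intro Max_in) auto
  then obtain L where L: "max_chain d n L" "concat L = Max (concat ` ?C)" by auto
  have "concat L' \<le> concat L" if "max_chain d n L'" for L'
    unfolding L(2) using that finite_max_chains[OF assms] by (intro Max_ge) auto
  then show ?thesis using L(1) by (auto simp: is_C_left_def lex_le_iff_less_eq)
qed

lemma C_left_lower_cover_lex_le:
  assumes C: "is_C_left d n L" and k: "Suc k < length L" and cov: "bruhat_covers d n y (L ! k)"
  shows "y \<le> L ! Suc k"
proof (rule ccontr)
  assume "\<not> y \<le> L ! Suc k"
  then have less: "L ! Suc k < y" by simp
  have sat: "saturated_chain d n (imax d n) L"
    using C by (simp add: is_C_left_def max_chain_iff_saturated_chain)
  then have steps: "successively (\<lambda>a b. bruhat_covers d n b a) L" by (simp add: saturated_chain_def)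
  have "y \<in> Idn d n" using cov by (simp add: bruhat_covers_def)
  then obtain L2 where L2: "saturated_chain d n y L2" using saturated_chain_exists by blast
  \<comment> \<open>exchange argument: continue L below L ! k through y instead of L ! Suc k\<close>
  define L' where "L' = take (Suc k) L @ L2"
  have "successively (\<lambda>a b. bruhat_covers d n b a) (take (Suc k) L)"
    using steps successively_append_iff[of _ "take (Suc k) L" "drop (Suc k) L"] by simp
  moreover have "take (Suc k) L = take k L @ [L ! k]" using k by (simp add: take_Suc_conv_app_nth)
  ultimately have "saturated_chain d n (imax d n) L'"
    using sat L2 cov unfolding L'_def saturated_chain_def successively_append_iff
    by (auto simp: hd_append hd_conv_nth)
  then have "concat L' \<le> concat L"
    using C by (simp add: is_C_left_def max_chain_iff_saturated_chain lex_le_iff_less_eq)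
  moreover have "concat L < concat L'"
  proof -
    have "L = take (Suc k) L @ L ! Suc k # drop (Suc (Suc k)) L" using k by (rule id_take_nth_drop)
    from arg_cong[OF this, of concat]
    have "concat L = concat (take (Suc k) L) @ L ! Suc k @ concat (drop (Suc (Suc k)) L)" by simp
    moreover have "L2 = y # tl L2" using L2 unfolding saturated_chain_def by (metis list.collapse)
    from arg_cong[OF this, of concat]
    have "concat L' = concat (take (Suc k) L) @ y @ concat (tl L2)" by (simp add: L'_def)
    moreover have "length (L ! Suc k) = length y"
      using successively_nth[OF steps k] cov by (simp add: bruhat_covers_def bruhat_less_def bruhat_le_def)
    ultimately show ?thesis
      using less by (simp add: append_less_append_left append_less_append_same_length)
  qed
  ultimately show False by simp
qed

lemma row_ne_imin: "k < d \<Longrightarrow> d < n \<Longrightarrow> row d n k \<noteq> imin d"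
proof
  assume "k < d" "d < n" "row d n k = imin d"
  then have "row d n k ! (d - 1) = imin d ! (d - 1)" by simp
  then show False
    using \<open>k < d\<close> \<open>d < n\<close> by (auto simp: nth_row imin_def simp del: upt_Suc split: if_split_asm)
qed

lemma C_left_nth_row:
  assumes C: "is_C_left d n L" and "1 \<le> d" "d < n"
  shows "k \<le> d \<Longrightarrow> k < length L \<and> L ! k = row d n k"
proof (induction k)
  case 0
  then show ?case
    using C by (auto simp: is_C_left_def max_chain_def hd_conv_nth[symmetric] imax_eq_row)
next
  case (Suc k)
  then have kd: "k < d" and kL: "k < length L" and Lk: "L ! k = row d n k" by auto
  have sat: "saturated_chain d n (imax d n) L"
    using C by (simp add: is_C_left_def max_chain_iff_saturated_chain)
  have "L ! k \<noteq> last L"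
    using sat Lk row_ne_imin[OF kd assms(3)] by (simp add: saturated_chain_def)
  moreover have "L \<noteq> []" using kL by auto
  ultimately have "k \<noteq> length L - 1" by (auto simp: last_conv_nth)
  then have SkL: "Suc k < length L" using kL by simp
  define c where "c = L ! Suc k"
  have "successively (\<lambda>a b. bruhat_covers d n b a) L" using sat by (simp add: saturated_chain_def)
  then have cov: "bruhat_covers d n c (row d n k)"
    using successively_nth[OF _ SkL] Lk by (simp add: c_def)
  \<comment> \<open>by greediness the lower cover row (Suc k) bounds c from below, which pins c ! 0\<close>
  have "row d n (Suc k) \<le> c"
    using C_left_lower_cover_lex_le[OF C SkL] bruhat_covers_row_Suc[OF kd assms(3)] Lk
    by (simp add: c_def)
  moreover have "length c = d" using cov by (simp add: bruhat_covers_def Idn_def)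
  moreover have "length (row d n (Suc k)) = d" using kd assms by (simp add: length_row)
  ultimately have "row d n (Suc k) ! 0 \<le> c ! 0"
    using assms(2) by (intro nth0_le_if_less_eq_list) auto
  then have "n - d \<le> c ! 0" using kd assms by (simp add: nth_row)
  then obtain m where "m \<le> d" "c = row d n m"
    using Idn_row_iff[OF assms(2,3), of c] cov by (auto simp: bruhat_covers_def)
  then have "c = row d n (Suc k)"
    using bruhat_covers_row_row_imp_Suc[of m d k n] cov kd assms by simp
  then show ?case using SkL by (simp add: c_def)
qed

lemma C_left_take_rows:
  assumes "is_C_left d n L" "1 \<le> d" "d < n"
  shows "take (d + 1) L = map (row d n) [0..<d + 1]"
proof -
  have len: "d < length L" using C_left_nth_row[OF assms order_refl] by simp
  show ?thesis
  proof (rule nth_equalityI)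
    show "length (take (d + 1) L) = length (map (row d n) [0..<d + 1])" using len by simp
    fix i assume "i < length (take (d + 1) L)"
    then show "take (d + 1) L ! i = map (row d n) [0..<d + 1] ! i"
      using C_left_nth_row[OF assms, of i] len by (simp del: upt_Suc)
  qed
qed

theorem lemma2p7:
  fixes d n :: nat
  assumes "1 \<le> d" and "d < n"
  defines "M \<equiv> {i \<in> Idn d n. ell i = ell (imax_n1 d n)}"
  defines "J \<equiv> {j \<in> Idn d n. lex_le (imax_n1 d n) j \<and> lex_le j (imax d n)}"
  shows "(\<forall>j \<in> M. lex_le j (imax_n1 d n))
    \<and> J = {j \<in> Idn d n. bruhat_le (imax_n1 d n) j \<and> bruhat_le j (imax d n)}
    \<and> (\<forall>a \<in> J. \<forall>b \<in> J. bruhat_le a b \<or> bruhat_le b a)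
    \<and> J = row d n ` {0..d}
    \<and> (\<exists>L. is_C_left d n L)
    \<and> (\<forall>L. is_C_left d n L \<longrightarrow> take (d + 1) L = map (row d n) [0..<d + 1])"
proof -
  have J_rows: "J = row d n ` {0..d}"
    using lex_interval_eq_rows[OF assms(1,2)] by (simp add: J_def lex_le_iff_less_eq)
  then show ?thesis
    using lex_le_imax_n1_if_same_ell[OF assms(1,2)] bruhat_interval_eq_rows[OF assms(1,2)]
      rows_bruhat_total[OF assms(2)] C_left_exists[OF assms(2)] C_left_take_rows[OF _ assms(1,2)]
    by (simp add: M_def lex_le_iff_less_eq)
qed

end
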